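(* Let $\mathcal X=(\Omega,S)$ be a coherent configuration and let $s$ be a relation of $\mathcal X$ which is connected. Suppose that for every point $\alpha\in\Omega$ the coherent configuration $(\mathcal X_\alpha)_{\alpha s}$ is semiregular. Then for every $(\alpha,\beta)\in s$ with $\alpha\ne\beta$ the set $\{\alpha,\beta\}$ is a base of $\mathcal X$. In particular $b(\mathcal X)\le 2$.
   Context: A coherent configuration on a finite set $\Omega$ is a pair $\mathcal X=(\Omega,S)$ where $S$ is a partition of $\Omega\times\Omega$ such that $1_\Omega$ is a union of elements of $S$, $s^*=\{(\beta,\alpha):(\alpha,\beta)\in s\}\in S$ for $s\in S$, and for $r,s,t\in S$ the number $|\{\gamma:(\alpha,\gamma)\in r,(\gamma,\beta)\in s\}|$ is independent of $(\alpha,\beta)\in t$. Relations are unions of elements of $S$; fibers are sets $\Gamma$ with $1_\Gamma\in S$. A relation $s$ is connected if it is symmetric ($s=s^*$) and any two distinct points of $\Omega$ are joined by a path in the graph $(\Omega,s)$. For $\gamma\in\Omega$, $\gamma s=\{\delta:(\gamma,\delta)\in s\}$. A fission of $\mathcal X$ is a coherent configuration on $\Omega$ whose relations include those of $\mathcal X$; complete means every basic relation is a singleton. $\mathcal X_\alpha$ is the smallest fission of $\mathcal X$ in which $\{\alpha\}$ is a fiber; $\alpha s$ is a union of fibers of $\mathcal X_\alpha$. For a union $\Gamma$ of fibers the restriction is $\mathcal X_\Gamma=(\Gamma,\{r\cap\Gamma^2:r\in S\}\setminus\{\emptyset\})$. A coherent configuration $(\Gamma,T)$ is semiregular if $|\{\delta:(\gamma,\delta)\in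 t\}|\le 1$ for all $\gamma\in\Gamma$, $t\in T$. A set $B$ is a base of $\mathcal X$ if the smallest fission in which all $\{\beta\}$, $\beta\in B$, are fibers is complete; $b(\mathcal X)$ is the minimal size of a base. *)

theory Defs
  imports Main
begin

definition coherent_configuration :: "'a set \<Rightarrow> ('a \<times> 'a) set set \<Rightarrow> bool" where
  "coherent_configuration \<Omega> S \<longleftrightarrow>
     finite \<Omega> \<and>
     {} \<notin> S \<and> \<Union>S = \<Omega> \<times> \<Omega> \<and>
     (\<forall>r\<in>S. \<forall>s\<in>S. r \<noteq> s \<longrightarrow> r \<inter> s = {}) \<and>
     (\<exists>D\<subseteq>S. Id_on \<Omega> = \<Union>D) \<and>
     (\<forall>s\<in>S. converse s \<in> S) \<and>
     (\<forall>r\<in>S. \<forall>s\<in>S. \<forall>t\<in>S. \<forall>a b a' b'. (a, b) \<in> t \<longrightarrow> (a', b') \<in> t \<longrightarrow>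
        card {c. (a, c) \<in> r \<and> (c, b) \<in> s} = card {c. (a', c) \<in> r \<and> (c, b') \<in> s})"

definition is_relation :: "('a \<times> 'a) set set \<Rightarrow> ('a \<times> 'a) set \<Rightarrow> bool" where
  "is_relation S s \<longleftrightarrow> (\<exists>T\<subseteq>S. s = \<Union>T)"

definition connected_rel :: "'a set \<Rightarrow> ('a \<times> 'a) set \<Rightarrow> bool" where
  "connected_rel \<Omega> s \<longleftrightarrow> s = converse s \<and>
     (\<forall>x\<in>\<Omega>. \<forall>y\<in>\<Omega>. x \<noteq> y \<longrightarrow> (x, y) \<in> s\<^sup>+)"

definition neighbourhood :: "'a \<Rightarrow> ('a \<times> 'a) set \<Rightarrow> 'a set" where
  "neighbourhood x s = {y. (x, y) \<in> s}"

definition fission :: "'a set \<Rightarrow> ('a \<times> 'a) set set \<Rightarrow> ('a \<times> 'a) set set \<Rightarrow> bool" where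
  "fission \<Omega> S T \<longleftrightarrow> coherent_configuration \<Omega> T \<and> (\<forall>s\<in>S. is_relation T s)"

(* T is the smallest fission of (\<Omega>, S) in which every {b}, b \<in> B, is a fiber *)
definition smallest_point_fission ::
    "'a set \<Rightarrow> ('a \<times> 'a) set set \<Rightarrow> 'a set \<Rightarrow> ('a \<times> 'a) set set \<Rightarrow> bool" where
  "smallest_point_fission \<Omega> S B T \<longleftrightarrow>
     fission \<Omega> S T \<and> (\<forall>b\<in>B. Id_on {b} \<in> T) \<and>
     (\<forall>T'. fission \<Omega> S T' \<and> (\<forall>b\<in>B. Id_on {b} \<in> T') \<longrightarrow> (\<forall>t\<in>T. is_relation T' t))"

definition complete_cc :: "('a \<times> 'a) set set \<Rightarrow> bool" where
  "complete_cc T \<longleftrightarrow> (\<forall>t\<in>T. \<exists>p. t = {p})"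

definition restriction :: "('a \<times> 'a) set set \<Rightarrow> 'a set \<Rightarrow> ('a \<times> 'a) set set" where
  "restriction T \<Gamma> = {r \<inter> (\<Gamma> \<times> \<Gamma>) | r. r \<in> T} - {{}}"

definition semiregular :: "'a set \<Rightarrow> ('a \<times> 'a) set set \<Rightarrow> bool" where
  "semiregular \<Gamma> T \<longleftrightarrow> (\<forall>g\<in>\<Gamma>. \<forall>t\<in>T. card {d. (g, d) \<in> t} \<le> 1)"

definition is_base :: "'a set \<Rightarrow> ('a \<times> 'a) set set \<Rightarrow> 'a set \<Rightarrow> bool" where
  "is_base \<Omega> S B \<longleftrightarrow> B \<subseteq> \<Omega> \<and> (\<exists>T. smallest_point_fission \<Omega> S B T \<and> complete_cc T)"

definition base_number :: "'a set \<Rightarrow> ('a \<times> 'a) set set \<Rightarrow> nat" where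
  "base_number \<Omega> S = (LEAST n. \<exists>B. is_base \<Omega> S B \<and> card B = n)"

end

theory Submission
  imports Defs
begin

text \<open>
  Let \<open>T\<close> be a fission of \<open>\<X>\<close> in which \<open>{\<alpha>}\<close> and \<open>{\<beta>}\<close> are fibers, where \<open>\<alpha> s \<beta>\<close>.
  If \<open>{\<gamma>}\<close> and \<open>{\<delta>}\<close> are fibers of \<open>T\<close> and \<open>\<delta>, \<epsilon> \<in> \<gamma>s\<close>, let \<open>t\<close> be the basic relation of
  \<open>\<X>\<^sub>\<gamma>\<close> containing \<open>(\<delta>, \<epsilon>)\<close>. By semiregularity \<open>\<delta>t \<inter> \<gamma>s = {\<epsilon>}\<close>, and since \<open>\<X>\<^sub>\<gamma>\<close> is
  coarser than \<open>T\<close>, the diagonal of \<open>\<delta>t \<inter> \<gamma>s\<close> is a relation of \<open>T\<close>: so \<open>{\<epsilon>}\<close> is a fiber.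
  Walking along \<open>s\<close>, which is connected, every point becomes a fiber of \<open>T\<close>, and a coherent
  configuration whose fibers are all singletons is complete.
\<close>

definition relations_of :: "('a \<times> 'a) set set \<Rightarrow> ('a \<times> 'a) set set" where
  "relations_of T = {\<Union>U | U. U \<subseteq> T}"

lemma is_relation_iff_mem_relations_of: "is_relation T s \<longleftrightarrow> s \<in> relations_of T"
  unfolding is_relation_def relations_of_def by auto

lemma Union_mem_relations_of: "U \<subseteq> T \<Longrightarrow> \<Union>U \<in> relations_of T"
  unfolding relations_of_def by blast

lemma relations_ofE: "r \<in> relations_of T \<Longrightarrow> (\<And>U. U \<subseteq> T \<Longrightarrow> r = \<Union>U \<Longrightarrow> P) \<Longrightarrow> P"
  unfolding relations_of_def by blast

lemma basic_mem_relations_of: "t \<in> T \<Longrightarrow> t \<in> relations_of T"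
  using Union_mem_relations_of[of "{t}" T] by simp

lemma Union_relations_mem_relations_of:
  assumes "\<And>u. u \<in> U \<Longrightarrow> u \<in> relations_of T"
  shows "\<Union>U \<in> relations_of T"
proof -
  have "\<Union>U = \<Union>{t\<in>T. \<exists>u\<in>U. t \<subseteq> u}"
  proof
    show "\<Union>U \<subseteq> \<Union>{t\<in>T. \<exists>u\<in>U. t \<subseteq> u}"
    proof
      fix p assume "p \<in> \<Union>U"
      then obtain u where u: "u \<in> U" "p \<in> u" by blast
      then obtain V where "V \<subseteq> T" "u = \<Union>V" using assms relations_ofE by metis
      with u show "p \<in> \<Union>{t\<in>T. \<exists>u\<in>U. t \<subseteq> u}" by blast
    qed
  qed blast
  then show ?thesis
    using Union_mem_relations_of[of "{t\<in>T. \<exists>u\<in>U. t \<subseteq> u}" T] by simp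
qed

lemma fission_relation_mem_relations_of:
  assumes "fission \<Omega> S T" and "is_relation S s"
  shows "s \<in> relations_of T"
proof -
  obtain U where "U \<subseteq> S" "s = \<Union>U" using assms(2) unfolding is_relation_def by blast
  moreover have "u \<in> relations_of T" if "u \<in> S" for u
    using assms(1) that unfolding fission_def is_relation_iff_mem_relations_of by blast
  ultimately show ?thesis by (blast intro: Union_relations_mem_relations_of)
qed

lemma singleton_diagonal_mem_relations_ofD:
  assumes "Id_on {x} \<in> relations_of T"
  shows "Id_on {x} \<in> T"
proof -
  obtain U where U: "U \<subseteq> T" "Id_on {x} = \<Union>U" using assms by (rule relations_ofE)
  then obtain u where "u \<in> U" "(x, x) \<in> u" by (metis Id_onI UnionE singletonI)
  moreover have "u \<subseteq> Id_on {x}" using \<open>u \<in> U\<close> U(2) by blast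
  ultimately have "u = Id_on {x}" by (auto simp: Id_on_def)
  then show ?thesis using \<open>u \<in> U\<close> U(1) by blast
qed

lemma coherent_configurationD:
  assumes "coherent_configuration \<Omega> T"
  shows "finite \<Omega>" "{} \<notin> T" "\<Union>T = \<Omega> \<times> \<Omega>"
    "\<And>r s. r \<in> T \<Longrightarrow> s \<in> T \<Longrightarrow> r \<noteq> s \<Longrightarrow> r \<inter> s = {}"
    "\<exists>D\<subseteq>T. Id_on \<Omega> = \<Union>D" "\<And>s. s \<in> T \<Longrightarrow> converse s \<in> T"
    "\<And>r s t a b a' b'. r \<in> T \<Longrightarrow> s \<in> T \<Longrightarrow> t \<in> T \<Longrightarrow> (a, b) \<in> t \<Longrightarrow> (a', b') \<in> t \<Longrightarrow>
        card {c. (a, c) \<in> r \<and> (c, b) \<in> s} = card {c. (a', c) \<in> r \<and> (c, b') \<in> s}"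
  using assms unfolding coherent_configuration_def by meson+

context
  fixes \<Omega> :: "'a set" and T :: "('a \<times> 'a) set set"
  assumes cc: "coherent_configuration \<Omega> T"
begin

lemma basic_relation_subset: "t \<in> T \<Longrightarrow> t \<subseteq> \<Omega> \<times> \<Omega>"
  using coherent_configurationD(3)[OF cc] by blast

lemma basic_relation_unique: "t \<in> T \<Longrightarrow> t' \<in> T \<Longrightarrow> p \<in> t \<Longrightarrow> p \<in> t' \<Longrightarrow> t = t'"
  using coherent_configurationD(4)[OF cc] by blast

lemma finite_basic_relations: "finite T"
  using finite_subset[of T "Pow (\<Omega> \<times> \<Omega>)"] basic_relation_subset coherent_configurationD(1)[OF cc]
  by blast

lemma relations_of_subset: "r \<in> relations_of T \<Longrightarrow> r \<subseteq> \<Omega> \<times> \<Omega>"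
  using basic_relation_subset by (auto elim: relations_ofE)

text \<open>The path count for unions splits into a sum over pairs of basic relations.\<close>

lemma card_paths_relations_eq:
  assumes U: "U \<subseteq> T" and V: "V \<subseteq> T"
    and t: "t \<in> T" and xy: "(x, y) \<in> t" and xy': "(x', y') \<in> t"
  shows "card {z. (x, z) \<in> \<Union>U \<and> (z, y) \<in> \<Union>V} = card {z. (x', z) \<in> \<Union>U \<and> (z, y') \<in> \<Union>V}"
proof -
  have fin: "finite (U \<times> V)"
    using finite_subset[OF U finite_basic_relations] finite_subset[OF V finite_basic_relations] by simp
  have split: "card {z. (a, z) \<in> \<Union>U \<and> (z, b) \<in> \<Union>V} =
     (\<Sum>(u, v)\<in>U \<times> V. card {z. (a, z) \<in> u \<and> (z, b) \<in> v})" for a b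
  proof -
    have "{z. (a, z) \<in> \<Union>U \<and> (z, b) \<in> \<Union>V} = (\<Union>(u, v)\<in>U \<times> V. {z. (a, z) \<in> u \<and> (z, b) \<in> v})"
      by auto
    moreover have "finite {z. (a, z) \<in> u \<and> (z, b) \<in> v}" if "u \<in> U" for u v
      using that U basic_relation_subset coherent_configurationD(1)[OF cc]
      by (auto intro: finite_subset[of _ \<Omega>])
    moreover have "{z. (a, z) \<in> u \<and> (z, b) \<in> v} \<inter> {z. (a, z) \<in> u' \<and> (z, b) \<in> v'} = {}"
      if "(u, v) \<in> U \<times> V" "(u', v') \<in> U \<times> V" "(u, v) \<noteq> (u', v')" for u v u' v'
      using that U V basic_relation_unique by blast
    ultimately show ?thesis
      by (simp add: card_UN_disjoint[OF fin] split_def)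
  qed
  have "card {z. (x, z) \<in> u \<and> (z, y) \<in> v} = card {z. (x', z) \<in> u \<and> (z, y') \<in> v}"
    if "(u, v) \<in> U \<times> V" for u v
    using coherent_configurationD(7)[OF cc _ _ t xy xy'] that U V by blast
  then show ?thesis
    unfolding split by (auto intro: sum.cong)
qed

lemma point_fiber_source_unique:
  assumes x: "Id_on {x} \<in> T" and t: "t \<in> T" and xy: "(x, y) \<in> t" and xy': "(x', y') \<in> t"
  shows "x' = x"
proof -
  have "card {c. (x', c) \<in> Id_on {x} \<and> (c, y') \<in> t} = card {c. (x, c) \<in> Id_on {x} \<and> (c, y) \<in> t}"
    using coherent_configurationD(7)[OF cc x t t xy' xy] .
  also have "{c. (x, c) \<in> Id_on {x} \<and> (c, y) \<in> t} = {x}" using xy by (auto simp: Id_on_def)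
  finally have "{c. (x', c) \<in> Id_on {x} \<and> (c, y') \<in> t} \<noteq> {}" by force
  then show ?thesis by (auto simp: Id_on_def)
qed

lemma complete_if_point_fibers:
  assumes "\<And>x. x \<in> \<Omega> \<Longrightarrow> Id_on {x} \<in> T"
  shows "complete_cc T"
  unfolding complete_cc_def
proof
  fix t assume t: "t \<in> T"
  then obtain x y where xy: "(x, y) \<in> t"
    using coherent_configurationD(2)[OF cc] by (metis ex_in_conv prod.exhaust)
  then have "x \<in> \<Omega>" "y \<in> \<Omega>" using basic_relation_subset[OF t] by auto
  have "q = (x, y)" if q: "q \<in> t" for q
  proof (cases q)
    case (Pair x' y')
    have "x' = x" using point_fiber_source_unique assms \<open>x \<in> \<Omega>\<close> t xy q Pair by blast
    moreover have "y' = y"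
      using point_fiber_source_unique[of y "converse t" x y' x'] assms \<open>y \<in> \<Omega>\<close>
        coherent_configurationD(6)[OF cc t] xy q Pair by blast
    ultimately show ?thesis using Pair by simp
  qed
  with xy have "t = {(x, y)}" by blast
  then show "\<exists>p. t = {p}" ..
qed

end

definition count_comp :: "'a set \<Rightarrow> ('a \<times> 'a) set \<Rightarrow> ('a \<times> 'a) set \<Rightarrow> nat \<Rightarrow> ('a \<times> 'a) set" where
  "count_comp \<Omega> r s k = {(x, y) \<in> \<Omega> \<times> \<Omega>. card {z. (x, z) \<in> r \<and> (z, y) \<in> s} = k}"

text \<open>
  A set-theoretic coherent algebra: \<open>count_comp \<Omega> r s k\<close> is the level set of the matrix product
  \<open>A(r) A(s)\<close> at \<open>k\<close>, so closure under it replaces closure under products.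
\<close>

locale coherent_algebra =
  fixes \<Omega> :: "'a set" and R :: "('a \<times> 'a) set set"
  assumes subset_Pow: "R \<subseteq> Pow (\<Omega> \<times> \<Omega>)"
    and full_mem: "\<Omega> \<times> \<Omega> \<in> R"
    and diagonal_mem: "Id_on \<Omega> \<in> R"
    and Diff_mem: "r \<in> R \<Longrightarrow> s \<in> R \<Longrightarrow> r - s \<in> R"
    and converse_mem: "r \<in> R \<Longrightarrow> converse r \<in> R"
    and count_comp_mem: "r \<in> R \<Longrightarrow> s \<in> R \<Longrightarrow> count_comp \<Omega> r s k \<in> R"
begin

lemma Int_mem: "r \<in> R \<Longrightarrow> s \<in> R \<Longrightarrow> r \<inter> s \<in> R"
  by (metis Diff_Diff_Int Diff_mem)

lemma Inter_mem: "finite F \<Longrightarrow> F \<noteq> {} \<Longrightarrow> F \<subseteq> R \<Longrightarrow> \<Inter>F \<in> R"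
  by (induction F rule: finite_ne_induct) (auto intro: Int_mem)

lemma mem_subset: "r \<in> R \<Longrightarrow> r \<subseteq> \<Omega> \<times> \<Omega>"
  using subset_Pow by blast

text \<open>
  With \<open>X = r\<inverse> \<circ> 1\<^sub>p\<close> (that is, \<open>pr \<times> {p}\<close>) the relation \<open>X \<circ> X\<inverse>\<close> is \<open>pr \<times> pr\<close>; both are
  obtained as \<open>count_comp \<dots> 1\<close>, and intersecting the latter with the diagonal gives \<open>1\<^sub>p\<^sub>r\<close>.
\<close>

lemma neighbourhood_diagonal_mem:
  assumes p: "p \<in> \<Omega>" and "Id_on {p} \<in> R" and r: "r \<in> R"
  shows "Id_on (neighbourhood p r) \<in> R"
proof -
  let ?N = "neighbourhood p r"
  have N: "?N \<subseteq> \<Omega>" using mem_subset[OF r] unfolding neighbourhood_def by blast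
  define X where "X = count_comp \<Omega> (converse r) (Id_on {p}) 1"
  have "X \<in> R" unfolding X_def using assms by (simp add: converse_mem count_comp_mem)
  have X_card: "card {z. (x, z) \<in> converse r \<and> (z, y) \<in> Id_on {p}} =
      (if x \<in> ?N \<and> y = p then 1 else 0)" for x y
  proof -
    have "{z. (x, z) \<in> converse r \<and> (z, y) \<in> Id_on {p}} = (if x \<in> ?N \<and> y = p then {p} else {})"
      unfolding neighbourhood_def by (auto simp: Id_on_def)
    then show ?thesis by simp
  qed
  have X: "X = ?N \<times> {p}"
    using N p unfolding X_def count_comp_def X_card by auto
  have XX_card: "card {z. (x, z) \<in> X \<and> (z, y) \<in> converse X} =
      (if x \<in> ?N \<and> y \<in> ?N then 1 else 0)" for x y
  proof -
    have "{z. (x, z) \<in> X \<and> (z, y) \<in> converse X} = (if x \<in> ?N \<and> y \<in> ?N then {p} else {})"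
      unfolding X by auto
    then show ?thesis by simp
  qed
  have "count_comp \<Omega> X (converse X) 1 = ?N \<times> ?N"
    using N unfolding count_comp_def XX_card by auto
  moreover have "(?N \<times> ?N) \<inter> Id_on \<Omega> = Id_on ?N" using N by (auto simp: Id_on_def)
  ultimately show ?thesis
    using \<open>X \<in> R\<close> by (metis Int_mem converse_mem count_comp_mem diagonal_mem)
qed

end

lemma coherent_algebra_Inter:
  assumes "\<And>R. R \<in> F \<Longrightarrow> coherent_algebra \<Omega> R"
  shows "coherent_algebra \<Omega> (Pow (\<Omega> \<times> \<Omega>) \<inter> \<Inter>F)"
  using assms unfolding coherent_algebra_def count_comp_def
  by (auto simp: Id_on_def)

lemma Diff_relations_of:
  assumes cc: "coherent_configuration \<Omega> T" and "U \<subseteq> T" "V \<subseteq> T"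
  shows "\<Union>U - \<Union>V = \<Union>(U - V)"
  using assms basic_relation_unique[OF cc] by blast

lemma count_comp_relations_of:
  assumes cc: "coherent_configuration \<Omega> T" and U: "U \<subseteq> T" and V: "V \<subseteq> T"
  shows "count_comp \<Omega> (\<Union>U) (\<Union>V) k = \<Union>{t\<in>T. t \<subseteq> count_comp \<Omega> (\<Union>U) (\<Union>V) k}"
proof
  show "count_comp \<Omega> (\<Union>U) (\<Union>V) k \<subseteq> \<Union>{t\<in>T. t \<subseteq> count_comp \<Omega> (\<Union>U) (\<Union>V) k}"
  proof
    fix p assume p: "p \<in> count_comp \<Omega> (\<Union>U) (\<Union>V) k"
    then obtain t where t: "t \<in> T" "p \<in> t"
      using coherent_configurationD(3)[OF cc] unfolding count_comp_def by blast
    have "q \<in> count_comp \<Omega> (\<Union>U) (\<Union>V) k" if "q \<in> t" for q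
    proof -
      obtain x y x' y' where "p = (x, y)" "q = (x', y')" by fastforce
      with p t \<open>q \<in> t\<close> card_paths_relations_eq[OF cc U V t(1), of x y x' y']
        basic_relation_subset[OF cc t(1)]
      show ?thesis unfolding count_comp_def by auto
    qed
    with t show "p \<in> \<Union>{t\<in>T. t \<subseteq> count_comp \<Omega> (\<Union>U) (\<Union>V) k}" by blast
  qed
qed blast

lemma coherent_algebra_relations_of:
  assumes cc: "coherent_configuration \<Omega> T"
  shows "coherent_algebra \<Omega> (relations_of T)"
proof
  show "relations_of T \<subseteq> Pow (\<Omega> \<times> \<Omega>)" using relations_of_subset[OF cc] by blast
  show "\<Omega> \<times> \<Omega> \<in> relations_of T"
    using Union_mem_relations_of[of T T] coherent_configurationD(3)[OF cc] by simp
  show "Id_on \<Omega> \<in> relations_of T"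
    using Union_mem_relations_of coherent_configurationD(5)[OF cc] by metis
next
  fix r s k assume "r \<in> relations_of T" "s \<in> relations_of T"
  then obtain U V where U: "U \<subseteq> T" "r = \<Union>U" and V: "V \<subseteq> T" "s = \<Union>V"
    by (auto elim!: relations_ofE)
  show "r - s \<in> relations_of T"
    using Diff_relations_of[OF cc U(1) V(1)] Union_mem_relations_of[of "U - V" T] U V by auto
  show "count_comp \<Omega> r s k \<in> relations_of T"
    using count_comp_relations_of[OF cc U(1) V(1)] Union_mem_relations_of U V
    by (metis (no_types, lifting) mem_Collect_eq subsetI)
next
  fix r assume "r \<in> relations_of T"
  then obtain U where "U \<subseteq> T" "r = \<Union>U" by (rule relations_ofE)
  moreover have "converse ` U \<subseteq> T" using \<open>U \<subseteq> T\<close> coherent_configurationD(6)[OF cc] by blast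
  moreover have "converse r = \<Union>(converse ` U)" using \<open>r = \<Union>U\<close> by blast
  ultimately show "converse r \<in> relations_of T"
    using Union_mem_relations_of[of "converse ` U" T] by simp
qed

definition atom :: "('a \<times> 'a) set set \<Rightarrow> 'a \<times> 'a \<Rightarrow> ('a \<times> 'a) set" where
  "atom R p = \<Inter>{r\<in>R. p \<in> r}"

locale finite_coherent_algebra = coherent_algebra +
  assumes finite_carrier: "finite \<Omega>"
begin

lemma finite_algebra: "finite R"
  using finite_subset[OF subset_Pow] finite_carrier by simp

lemma atom_mem: "p \<in> \<Omega> \<times> \<Omega> \<Longrightarrow> atom R p \<in> R"
  unfolding atom_def using full_mem finite_algebra by (intro Inter_mem) auto

lemma mem_atom: "p \<in> \<Omega> \<times> \<Omega> \<Longrightarrow> p \<in> atom R p"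
  unfolding atom_def by blast

lemma atom_subset: "p \<in> r \<Longrightarrow> r \<in> R \<Longrightarrow> atom R p \<subseteq> r"
  unfolding atom_def by blast

lemma atom_eq:
  assumes p: "p \<in> \<Omega> \<times> \<Omega>" and q: "q \<in> atom R p"
  shows "atom R q = atom R p"
proof -
  have qO: "q \<in> \<Omega> \<times> \<Omega>" using mem_subset[OF atom_mem[OF p]] q by blast
  have "p \<in> atom R q"
  proof (rule ccontr)
    assume "p \<notin> atom R q"
    then have "atom R p \<subseteq> atom R p - atom R q"
      using atom_subset Diff_mem[OF atom_mem[OF p] atom_mem[OF qO]] mem_atom[OF p] by blast
    then show False using q mem_atom[OF qO] by blast
  qed
  then show ?thesis
    using atom_subset[OF q atom_mem[OF p]] atom_subset[OF _ atom_mem[OF qO]] by blast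
qed

lemma atom_diagonal:
  assumes "b \<in> \<Omega>" and "Id_on {b} \<in> R"
  shows "atom R (b, b) = Id_on {b}"
  using atom_subset[OF _ assms(2)] mem_atom[of "(b, b)"] assms(1) by (auto simp: Id_on_def)

lemma coherent_configuration_atoms: "coherent_configuration \<Omega> (atom R ` (\<Omega> \<times> \<Omega>))"
proof -
  let ?T = "atom R ` (\<Omega> \<times> \<Omega>)"
  have disjoint: "r \<inter> s = {}" if r: "r \<in> ?T" and s: "s \<in> ?T" and "r \<noteq> s" for r s
  proof (rule ccontr)
    obtain p q where p: "p \<in> \<Omega> \<times> \<Omega>" "r = atom R p" and q: "q \<in> \<Omega> \<times> \<Omega>" "s = atom R q"
      using r s by blast
    assume "r \<inter> s \<noteq> {}"
    then obtain w where "w \<in> atom R p" "w \<in> atom R q" using p q by blast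
    then have "atom R p = atom R q" using atom_eq p(1) q(1) by metis
    with \<open>r \<noteq> s\<close> p q show False by simp
  qed
  have "Id_on \<Omega> = \<Union>(atom R ` Id_on \<Omega>)"
  proof
    show "Id_on \<Omega> \<subseteq> \<Union>(atom R ` Id_on \<Omega>)"
    proof
      fix p assume "p \<in> Id_on \<Omega>"
      with mem_atom[of p] show "p \<in> \<Union>(atom R ` Id_on \<Omega>)" by (auto simp: Id_on_def)
    qed
    show "\<Union>(atom R ` Id_on \<Omega>) \<subseteq> Id_on \<Omega>" using atom_subset[OF _ diagonal_mem] by blast
  qed
  moreover have "atom R ` Id_on \<Omega> \<subseteq> ?T" by (auto simp: Id_on_def)
  ultimately have diagonal: "\<exists>D\<subseteq>?T. Id_on \<Omega> = \<Union>D" by blast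
  have converse: "converse r \<in> ?T" if "r \<in> ?T" for r
  proof -
    obtain x y where xy: "(x, y) \<in> \<Omega> \<times> \<Omega>" "r = atom R (x, y)" using \<open>r \<in> ?T\<close> by blast
    then have yx: "(y, x) \<in> \<Omega> \<times> \<Omega>" by blast
    have "atom R (y, x) \<subseteq> converse r"
      using atom_subset[of "(y, x)" "converse r"] converse_mem atom_mem mem_atom xy by simp
    moreover have "r \<subseteq> converse (atom R (y, x))"
      using atom_subset[of "(x, y)" "converse (atom R (y, x))"] converse_mem atom_mem mem_atom xy yx
      by simp
    ultimately have "converse r = atom R (y, x)" by blast
    then show ?thesis using yx by blast
  qed
  have intersection_numbers: "card {c. (a, c) \<in> r \<and> (c, b) \<in> s} = card {c. (a', c) \<in> r \<and> (c, b') \<in> s}"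
    if "r \<in> ?T" "s \<in> ?T" "t \<in> ?T" "(a, b) \<in> t" "(a', b') \<in> t" for r s t a b a' b'
  proof -
    let ?k = "card {c. (a, c) \<in> r \<and> (c, b) \<in> s}"
    obtain p where p: "p \<in> \<Omega> \<times> \<Omega>" "t = atom R p" using \<open>t \<in> ?T\<close> by blast
    have "r \<in> R" "s \<in> R" using that atom_mem by auto
    moreover have "(a, b) \<in> count_comp \<Omega> r s ?k"
      using mem_subset[OF atom_mem[OF p(1)]] p(2) \<open>(a, b) \<in> t\<close> unfolding count_comp_def by blast
    moreover have "atom R (a, b) = t" using atom_eq[OF p(1)] p(2) \<open>(a, b) \<in> t\<close> by simp
    ultimately have "t \<subseteq> count_comp \<Omega> r s ?k"
      using atom_subset[of "(a, b)" "count_comp \<Omega> r s ?k"] count_comp_mem by simp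
    then show ?thesis using \<open>(a', b') \<in> t\<close> unfolding count_comp_def by auto
  qed
  have "{} \<notin> ?T" "\<Union>?T = \<Omega> \<times> \<Omega>" using mem_atom mem_subset[OF atom_mem] by blast+
  with finite_carrier diagonal show ?thesis
    unfolding coherent_configuration_def
    by (intro conjI ballI allI impI disjoint converse intersection_numbers) assumption+
qed

lemma subset_relations_of_atoms: "R \<subseteq> relations_of (atom R ` (\<Omega> \<times> \<Omega>))"
proof
  fix r assume r: "r \<in> R"
  have "r = \<Union>(atom R ` r)"
  proof
    show "r \<subseteq> \<Union>(atom R ` r)" using mem_atom mem_subset[OF r] by blast
    show "\<Union>(atom R ` r) \<subseteq> r" using atom_subset[OF _ r] by blast
  qed
  moreover have "atom R ` r \<subseteq> atom R ` (\<Omega> \<times> \<Omega>)" using mem_subset[OF r] by blast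
  ultimately show "r \<in> relations_of (atom R ` (\<Omega> \<times> \<Omega>))"
    using Union_mem_relations_of by metis
qed

end

text \<open>
  \<open>\<X>\<^sub>B\<close> exists: its relations are those common to all fissions in which the points of \<open>B\<close>
  are fibers, and these form a coherent algebra whose atoms are its basic relations.
\<close>

lemma smallest_point_fission_exists:
  assumes cc: "coherent_configuration \<Omega> S" and B: "B \<subseteq> \<Omega>"
  obtains T where "smallest_point_fission \<Omega> S B T"
proof -
  let ?admissible = "\<lambda>T'. fission \<Omega> S T' \<and> (\<forall>b\<in>B. Id_on {b} \<in> T')"
  define R where "R = Pow (\<Omega> \<times> \<Omega>) \<inter> \<Inter>{relations_of T' | T'. ?admissible T'}"
  have "coherent_algebra \<Omega> R"
    unfolding R_def
    by (rule coherent_algebra_Inter) (auto simp: fission_def intro: coherent_algebra_relations_of)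
  then interpret finite_coherent_algebra \<Omega> R
    using coherent_configurationD(1)[OF cc]
    by (simp add: finite_coherent_algebra_def finite_coherent_algebra_axioms_def)
  define T where "T = atom R ` (\<Omega> \<times> \<Omega>)"
  have R_T: "R \<subseteq> relations_of T" unfolding T_def by (rule subset_relations_of_atoms)
  have "s \<in> R" if "s \<in> S" for s
    using that basic_relation_subset[OF cc] unfolding R_def fission_def is_relation_iff_mem_relations_of
    by blast
  then have "fission \<Omega> S T"
    unfolding fission_def T_def is_relation_iff_mem_relations_of
    using coherent_configuration_atoms R_T[unfolded T_def] by blast
  moreover have "Id_on {b} \<in> T" if "b \<in> B" for b
  proof -
    have "Id_on {b} \<in> R"
      using that B basic_mem_relations_of unfolding R_def by (auto simp: Id_on_def)
    then show ?thesis unfolding T_def using that B atom_diagonal by (metis SigmaI image_eqI subsetD)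
  qed
  moreover have "is_relation T' t" if "?admissible T'" "t \<in> T" for T' t
    using that atom_mem unfolding T_def R_def is_relation_iff_mem_relations_of by blast
  ultimately show ?thesis
    using that unfolding smallest_point_fission_def by blast
qed

lemma point_fiber_spreads:
  assumes fis: "fission \<Omega> S T" and s: "is_relation S s"
    and X: "smallest_point_fission \<Omega> S {g} X"
    and semireg: "semiregular (neighbourhood g s) (restriction X (neighbourhood g s))"
    and g: "Id_on {g} \<in> T" and d: "Id_on {d} \<in> T"
    and gd: "(g, d) \<in> s" and ge: "(g, e) \<in> s"
  shows "Id_on {e} \<in> T"
proof -
  have ccT: "coherent_configuration \<Omega> T" using fis unfolding fission_def by blast
  interpret coherent_algebra \<Omega> "relations_of T" by (rule coherent_algebra_relations_of[OF ccT])
  have sT: "s \<in> relations_of T" using fission_relation_mem_relations_of[OF fis s] .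
  have "g \<in> \<Omega>" "d \<in> \<Omega>" "e \<in> \<Omega>" using mem_subset[OF sT] gd ge by auto
  have ccX: "coherent_configuration \<Omega> X" using X unfolding smallest_point_fission_def fission_def by blast
  obtain t where t: "t \<in> X" "(d, e) \<in> t"
    using coherent_configurationD(3)[OF ccX] \<open>d \<in> \<Omega>\<close> \<open>e \<in> \<Omega>\<close> by blast
  have tT: "t \<in> relations_of T"
    using X fis g t(1) unfolding smallest_point_fission_def is_relation_iff_mem_relations_of by blast
  let ?N = "neighbourhood g s"
  have "d \<in> ?N" "e \<in> ?N" using gd ge unfolding neighbourhood_def by auto
  have unique: "y = e" if "(d, y) \<in> t" "y \<in> ?N" for y
  proof -
    let ?D = "{y. (d, y) \<in> t \<inter> (?N \<times> ?N)}"
    have "t \<inter> (?N \<times> ?N) \<in> restriction X ?N"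
      unfolding restriction_def using t \<open>d \<in> ?N\<close> \<open>e \<in> ?N\<close> by blast
    then have "card ?D \<le> 1" using semireg \<open>d \<in> ?N\<close> unfolding semiregular_def by blast
    moreover have "finite ?D"
      using basic_relation_subset[OF ccX t(1)] coherent_configurationD(1)[OF ccX]
      by (auto intro: finite_subset[of _ \<Omega>])
    ultimately have "\<forall>y\<in>?D. \<forall>z\<in>?D. y = z" using card_le_Suc0_iff_eq[of ?D] by simp
    moreover have "y \<in> ?D" "e \<in> ?D" using that t(2) \<open>d \<in> ?N\<close> \<open>e \<in> ?N\<close> by auto
    ultimately show ?thesis by blast
  qed
  have "neighbourhood d t \<inter> ?N = {e}"
  proof
    show "neighbourhood d t \<inter> ?N \<subseteq> {e}" using unique unfolding neighbourhood_def[of d t] by blast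
    show "{e} \<subseteq> neighbourhood d t \<inter> ?N" using t(2) \<open>e \<in> ?N\<close> unfolding neighbourhood_def[of d t] by blast
  qed
  then have "Id_on (neighbourhood d t) \<inter> Id_on ?N = Id_on {e}"
    by (auto simp: Id_on_iff)
  moreover have "Id_on (neighbourhood d t) \<inter> Id_on ?N \<in> relations_of T"
    using Int_mem neighbourhood_diagonal_mem[OF \<open>d \<in> \<Omega>\<close> basic_mem_relations_of[OF d] tT]
      neighbourhood_diagonal_mem[OF \<open>g \<in> \<Omega>\<close> basic_mem_relations_of[OF g] sT] by blast
  ultimately show ?thesis using singleton_diagonal_mem_relations_ofD by simp
qed

lemma point_fibers_of_connected:
  assumes cc: "coherent_configuration \<Omega> S" and s: "is_relation S s" and con: "connected_rel \<Omega> s"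
    and semireg: "\<forall>a\<in>\<Omega>. \<forall>X. smallest_point_fission \<Omega> S {a} X \<longrightarrow>
           semiregular (neighbourhood a s) (restriction X (neighbourhood a s))"
    and fis: "fission \<Omega> S T" and ab: "(a, b) \<in> s"
    and a: "Id_on {a} \<in> T" and b: "Id_on {b} \<in> T" and x: "x \<in> \<Omega>"
  shows "Id_on {x} \<in> T"
proof -
  have ccT: "coherent_configuration \<Omega> T" using fis unfolding fission_def by blast
  have s_subset: "s \<subseteq> \<Omega> \<times> \<Omega>"
    using relations_of_subset[OF ccT] fission_relation_mem_relations_of[OF fis s] by blast
  have "converse s = s" using con unfolding connected_rel_def by simp
  then have sym: "(y, z) \<in> s" if "(z, y) \<in> s" for y z
    using that by blast
  have spread: "Id_on {e} \<in> T" if "Id_on {g} \<in> T" "Id_on {d} \<in> T" "(g, d) \<in> s" "(g, e) \<in> s" for g d e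
  proof -
    have "g \<in> \<Omega>" using that(3) s_subset by blast
    then obtain X where "smallest_point_fission \<Omega> S {g} X"
      by (auto intro: smallest_point_fission_exists[OF cc, of "{g}"])
    then show ?thesis using point_fiber_spreads[OF fis s _ _ that] semireg \<open>g \<in> \<Omega>\<close> by blast
  qed
  define good where "good y \<longleftrightarrow> Id_on {y} \<in> T \<and> (\<forall>w. (y, w) \<in> s \<longrightarrow> Id_on {w} \<in> T)" for y
  have "good y" if "(a, y) \<in> s\<^sup>*" for y
    using that
  proof (induction rule: rtrancl_induct)
    case base
    show ?case using a spread[OF a b ab] unfolding good_def by blast
  next
    case (step y z)
    have y: "Id_on {y} \<in> T" and z: "Id_on {z} \<in> T" using step.IH step.hyps(2) unfolding good_def by blast+
    have "Id_on {w} \<in> T" if "(z, w) \<in> s" for w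
      using spread[OF z y sym[OF step.hyps(2)] that] .
    with z show ?case unfolding good_def by blast
  qed
  moreover have "(a, x) \<in> s\<^sup>*"
  proof (cases "a = x")
    case False
    have "a \<in> \<Omega>" using ab s_subset by blast
    with con x False have "(a, x) \<in> s\<^sup>+" unfolding connected_rel_def by blast
    then show ?thesis by (rule trancl_into_rtrancl)
  qed simp
  ultimately show ?thesis unfolding good_def by blast
qed

lemma is_base_carrier:
  assumes cc: "coherent_configuration \<Omega> S"
  shows "is_base \<Omega> S \<Omega>"
proof -
  obtain T where T: "smallest_point_fission \<Omega> S \<Omega> T"
    by (rule smallest_point_fission_exists[OF cc subset_refl])
  then have "complete_cc T"
    using complete_if_point_fibers unfolding smallest_point_fission_def fission_def by blast
  with T show ?thesis unfolding is_base_def by blast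
qed

lemma base_number_le_card: "is_base \<Omega> S B \<Longrightarrow> base_number \<Omega> S \<le> card B"
  unfolding base_number_def by (rule Least_le) blast

lemma is_base_of_edge:
  assumes cc: "coherent_configuration \<Omega> S" and s: "is_relation S s" and con: "connected_rel \<Omega> s"
    and semireg: "\<forall>a\<in>\<Omega>. \<forall>X. smallest_point_fission \<Omega> S {a} X \<longrightarrow>
           semiregular (neighbourhood a s) (restriction X (neighbourhood a s))"
    and ab: "(a, b) \<in> s"
  shows "is_base \<Omega> S {a, b}"
proof -
  have B: "{a, b} \<subseteq> \<Omega>"
    using ab s basic_relation_subset[OF cc] unfolding is_relation_def by blast
  obtain T where T: "smallest_point_fission \<Omega> S {a, b} T"
    by (rule smallest_point_fission_exists[OF cc B])
  then have "fission \<Omega> S T" "Id_on {a} \<in> T" "Id_on {b} \<in> T"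
    unfolding smallest_point_fission_def by auto
  then have "complete_cc T"
    using point_fibers_of_connected[OF cc s con semireg _ ab] complete_if_point_fibers
    unfolding fission_def by blast
  with B T show ?thesis unfolding is_base_def by blast
qed

lemma card_le_one_if_connected_rel_subset_Id:
  assumes con: "connected_rel \<Omega> s" and "s \<subseteq> Id" and "finite \<Omega>"
  shows "card \<Omega> \<le> 1"
proof -
  have "s - Id = {}" using \<open>s \<subseteq> Id\<close> by blast
  have "s\<^sup>* = (s - Id)\<^sup>*" by (rule rtrancl_r_diff_Id[symmetric])
  also have "\<dots> = Id" by (simp only: \<open>s - Id = {}\<close> rtrancl_empty)
  finally have star: "s\<^sup>* = Id" .
  have "x = y" if "x \<in> \<Omega>" "y \<in> \<Omega>" for x y
  proof (rule ccontr)
    assume "x \<noteq> y"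
    with con that have "(x, y) \<in> s\<^sup>+" unfolding connected_rel_def by blast
    then have "(x, y) \<in> s\<^sup>*" by (rule trancl_into_rtrancl)
    with star \<open>x \<noteq> y\<close> show False by simp
  qed
  then show ?thesis using card_le_Suc0_iff_eq[OF \<open>finite \<Omega>\<close>] by (simp add: One_nat_def)
qed

theorem theorem3p3:
  fixes \<Omega> :: "'a set" and S :: "('a \<times> 'a) set set" and s :: "('a \<times> 'a) set"
  assumes "coherent_configuration \<Omega> S"
    and "is_relation S s"
    and "connected_rel \<Omega> s"
    and "\<forall>a\<in>\<Omega>. \<forall>T. smallest_point_fission \<Omega> S {a} T \<longrightarrow>
           semiregular (neighbourhood a s) (restriction T (neighbourhood a s))"
  shows "(\<forall>a b. (a, b) \<in> s \<and> a \<noteq> b \<longrightarrow> is_base \<Omega> S {a, b}) \<and> base_number \<Omega> S \<le> 2"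
proof -
  have "base_number \<Omega> S \<le> 2"
  proof (cases "s \<subseteq> Id")
    case False
    then obtain a b where "(a, b) \<in> s" "a \<noteq> b" by auto
    then have "base_number \<Omega> S \<le> card {a, b}"
      using base_number_le_card is_base_of_edge[OF assms] by blast
    with \<open>a \<noteq> b\<close> show ?thesis by simp
  next
    case True
    then have "card \<Omega> \<le> 1"
      using card_le_one_if_connected_rel_subset_Id assms(3) coherent_configurationD(1)[OF assms(1)]
      by blast
    then show ?thesis using base_number_le_card[OF is_base_carrier[OF assms(1)]] by linarith
  qed
  then show ?thesis using is_base_of_edge[OF assms] by blast
qed

end
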